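(* Let $g$ be a flat metric near a boundary point $x_0$ of a manifold with boundary, using Fermi coordinates (tangential indices $\alpha,\beta$, normal index $n$), and suppose the boundary is umbilic for $g$ with principal curvature $\mu$, i.e. $L_{\alpha\beta}=\mu g_{\alpha\beta}$. Let $u$ be a smooth function, $\hat g=e^{-2u}g$, and $\hat A=\nabla^2u+du\otimes du-\frac12|\nabla u|^2g$ (the Schouten tensor of $\hat g$). Suppose the second fundamental form of $\hat g$ satisfies $\hat L_{\alpha\beta}=\hat\mu\,\hat g_{\alpha\beta}$ near $x_0$ for some constant $\hat\mu$. Let $F=F(\sigma_1(g^{-1}\hat A),\dots,\sigma_n(g^{-1}\hat A))$ for a differentiable function $F$ of $n$ variables, and $F^{ij}=\partial F/\partial\hat A_{ij}$. Then at $x_0$: (a) $F^{\alpha n}=0$ for all tangential $\alpha$; (b) $\hat A_{\alpha\beta,n}=2\mu\hat A_{\alpha\beta}-\hat\mu e^{-u}\big(\hat A_{\alpha\beta}+\hat A_{nn}g_{\alpha\beta}\big)$.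
   Context: Fermi coordinates: $(x_1,\dots,x_{n-1})$ a chart on the boundary and $x_n$ the arclength along normal geodesics, so $g=dx^ndx^n+g_{\alpha\beta}dx^\alpha dx^\beta$. Covariant derivatives are with respect to $g$; $\hat A_{\alpha\beta,n}$ is the covariant derivative of $\hat A$ in the unit inner normal direction $n$. $\sigma_k(g^{-1}\hat A)$ is the $k$-th elementary symmetric function of the eigenvalues of $g^{-1}\hat A$. *)

theory Defs
  imports "HOL-Analysis.Analysis" "HOL-Computational_Algebra.Polynomial"
begin

text \<open>The index type 'n
  indexes the coordinates; a distinguished index nn is the normal coordinate
  x_n of the Fermi chart, the boundary is {x. x$nn = 0} and the manifold side
  is {x. x$nn \<ge> 0}.\<close>

definition pd :: "'n::finite \<Rightarrow> (real^'n \<Rightarrow> real) \<Rightarrow> real^'n \<Rightarrow> real" where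
  "pd i f x = deriv (\<lambda>t. f (x + t *\<^sub>R axis i 1)) 0"

definition smooth_on :: "(real^'n::finite) set \<Rightarrow> (real^'n \<Rightarrow> real) \<Rightarrow> bool" where
  "smooth_on U f \<longleftrightarrow> (\<forall>is. (foldr pd is f) differentiable_on U)"

definition ginv :: "(real^'n::finite \<Rightarrow> real^'n^'n) \<Rightarrow> real^'n \<Rightarrow> real^'n^'n" where
  "ginv g x = matrix_inv (g x)"

definition christ :: "(real^'n::finite \<Rightarrow> real^'n^'n) \<Rightarrow> 'n \<Rightarrow> 'n \<Rightarrow> 'n \<Rightarrow> real^'n \<Rightarrow> real" where
  "christ g k i j x = (1/2) * (\<Sum>l\<in>UNIV. ginv g x $ k $ l *
      (pd i (\<lambda>y. g y $ j $ l) x + pd j (\<lambda>y. g y $ i $ l) x - pd l (\<lambda>y. g y $ i $ j) x))"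

definition riemann :: "(real^'n::finite \<Rightarrow> real^'n^'n) \<Rightarrow> 'n \<Rightarrow> 'n \<Rightarrow> 'n \<Rightarrow> 'n \<Rightarrow> real^'n \<Rightarrow> real" where
  "riemann g l i j k x = pd i (christ g l j k) x - pd j (christ g l i k) x
     + (\<Sum>m\<in>UNIV. christ g l i m x * christ g m j k x - christ g l j m x * christ g m i k x)"

definition flat_at :: "(real^'n::finite \<Rightarrow> real^'n^'n) \<Rightarrow> real^'n \<Rightarrow> bool" where
  "flat_at g x \<longleftrightarrow> (\<forall>l i j k. riemann g l i j k x = 0)"

text \<open>Unit inner normal (w.r.t. metric h) to the boundary {x$nn = 0}:
  nu^j = h^{j nn} / sqrt(h^{nn nn}), i.e. the normalized h-gradient of x_n.\<close>
definition inner_normal :: "(real^'n::finite \<Rightarrow> real^'n^'n) \<Rightarrow> 'n \<Rightarrow> real^'n \<Rightarrow> 'n \<Rightarrow> real" where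
  "inner_normal h nn x j = ginv h x $ j $ nn / sqrt (ginv h x $ nn $ nn)"

text \<open>Second fundamental form L_{ab} = h(nabla_{d_a} d_b, nu), nu the unit inner normal.\<close>
definition sff :: "(real^'n::finite \<Rightarrow> real^'n^'n) \<Rightarrow> 'n \<Rightarrow> 'n \<Rightarrow> 'n \<Rightarrow> real^'n \<Rightarrow> real" where
  "sff h nn a b x = (\<Sum>k\<in>UNIV. \<Sum>j\<in>UNIV. christ h k a b x * h x $ k $ j * inner_normal h nn x j)"

definition conf :: "(real^'n::finite \<Rightarrow> real^'n^'n) \<Rightarrow> (real^'n \<Rightarrow> real) \<Rightarrow> real^'n \<Rightarrow> real^'n^'n" where
  "conf g u x = exp (- 2 * u x) *\<^sub>R g x"

definition hess :: "(real^'n::finite \<Rightarrow> real^'n^'n) \<Rightarrow> (real^'n \<Rightarrow> real) \<Rightarrow> 'n \<Rightarrow> 'n \<Rightarrow> real^'n \<Rightarrow> real" where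
  "hess g u i j x = pd i (pd j u) x - (\<Sum>k\<in>UNIV. christ g k i j x * pd k u x)"

definition gradnorm2 :: "(real^'n::finite \<Rightarrow> real^'n^'n) \<Rightarrow> (real^'n \<Rightarrow> real) \<Rightarrow> real^'n \<Rightarrow> real" where
  "gradnorm2 g u x = (\<Sum>i\<in>UNIV. \<Sum>j\<in>UNIV. ginv g x $ i $ j * pd i u x * pd j u x)"

definition Ahat :: "(real^'n::finite \<Rightarrow> real^'n^'n) \<Rightarrow> (real^'n \<Rightarrow> real) \<Rightarrow> real^'n \<Rightarrow> real^'n^'n" where
  "Ahat g u x = (\<chi> i j. hess g u i j x + pd i u x * pd j u x - (1/2) * gradnorm2 g u x * g x $ i $ j)"

definition cov2 :: "(real^'n::finite \<Rightarrow> real^'n^'n) \<Rightarrow> (real^'n \<Rightarrow> real^'n^'n) \<Rightarrow> 'n \<Rightarrow> 'n \<Rightarrow> 'n \<Rightarrow> real^'n \<Rightarrow> real" where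
  "cov2 g T a b c x = pd c (\<lambda>y. T y $ a $ b) x
     - (\<Sum>k\<in>UNIV. christ g k c a x * T x $ k $ b + christ g k c b x * T x $ a $ k)"

text \<open>Characteristic polynomial det(tI - A) and sigma_k(A), the k-th elementary
  symmetric function of the eigenvalues of A (counted with multiplicity):
  det(tI - A) = sum_k (-1)^k sigma_k(A) t^(n-k).\<close>
definition charpoly :: "real^'n::finite^'n \<Rightarrow> real poly" where
  "charpoly A = det (\<chi> i j. (if i = j then [:0, 1:] else 0) - [:A $ i $ j:])"

definition esym :: "nat \<Rightarrow> real^'n::finite^'n \<Rightarrow> real" where
  "esym k A = (-1) ^ k * coeff (charpoly A) (CARD('n) - k)"

text \<open>F^{ij} = dF/dAhat_{ij} where F is regarded as the function
  M \<mapsto> F(sigma_1(g0^{-1} M), ..., sigma_n(g0^{-1} M)) of the matrix entries;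
  idx enumerates the n arguments of F (bijection 'n -> {1..n}).\<close>
definition Fcoef :: "(real^'n::finite \<Rightarrow> real) \<Rightarrow> ('n \<Rightarrow> nat) \<Rightarrow> real^'n^'n \<Rightarrow> real^'n^'n
    \<Rightarrow> 'n \<Rightarrow> 'n \<Rightarrow> real" where
  "Fcoef F idx g0 A i j = deriv (\<lambda>t. F (\<chi> m. esym (idx m)
      (matrix_inv g0 ** (A + t *\<^sub>R (\<chi> a b. if a = i \<and> b = j then 1 else 0))))) 0"

end

theory Submission
  imports Defs
begin

(* In Fermi coordinates the umbilicity of the boundary reads d_n g_ab = -2 mu g_ab, which fixes
   every Christoffel symbol with a normal index on the boundary (Gamma^c_nb = -mu delta^c_b,
   Gamma^n_ab = mu g_ab, Gamma^k_nn = 0); flatness, R^k_nab = 0, then gives their normal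
   derivatives, d_n Gamma^k_ab = -mu^2 g_ab delta^k_n.  For e^(-2u) g the same computation shows
   that umbilicity with the constant muhat forces u_n = muhat e^(-u) - mu along the boundary, and
   differentiating tangentially, u_na = -muhat e^(-u) u_a.  Hence Ahat_na = 0, so the n-th row of
   g^(-1) Ahat vanishes off the diagonal, and perturbing Ahat in the entry (a,n) does not change
   its characteristic polynomial: this is (a).  Part (b) is the normal derivative of Ahat_ab,
   computed from these identities and the symmetry of mixed partial derivatives of u. *)

section \<open>Partial derivatives along coordinate lines\<close>

lemma line_has_field_derivative:
  fixes f :: "'a::real_normed_vector \<Rightarrow> real"
  assumes "(f has_derivative f') (at (y + s *\<^sub>R v))"
  shows "((\<lambda>t. f (y + t *\<^sub>R v)) has_field_derivative f' v) (at s)"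
proof -
  have "((\<lambda>t. y + t *\<^sub>R v) has_derivative (\<lambda>t. t *\<^sub>R v)) (at s)"
    by (auto intro!: derivative_eq_intros)
  from diff_chain_at[OF this assms]
  have "((\<lambda>t. f (y + t *\<^sub>R v)) has_derivative (\<lambda>t. f' (t *\<^sub>R v))) (at s)"
    by (simp add: o_def)
  moreover have "(\<lambda>t. f' (t *\<^sub>R v)) = (*) (f' v)"
    using has_derivative_linear[OF assms] by (auto simp: linear_cmul)
  ultimately show ?thesis unfolding has_field_derivative_def by simp
qed

lemma has_field_derivative_pd_at:
  fixes f :: "real^'n::finite \<Rightarrow> real"
  assumes "f differentiable (at (y + s *\<^sub>R axis i 1))"
  shows "((\<lambda>t. f (y + t *\<^sub>R axis i 1)) has_field_derivative pd i f (y + s *\<^sub>R axis i 1)) (at s)"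
proof -
  obtain f' where f': "(f has_derivative f') (at (y + s *\<^sub>R axis i 1))"
    using assms by (auto simp: differentiable_def)
  have "((\<lambda>t. f ((y + s *\<^sub>R axis i 1) + t *\<^sub>R axis i 1)) has_field_derivative f' (axis i 1)) (at 0)"
    by (rule line_has_field_derivative) (use f' in simp)
  then have "pd i f (y + s *\<^sub>R axis i 1) = f' (axis i 1)"
    unfolding pd_def by (rule DERIV_imp_deriv)
  with line_has_field_derivative[OF f'] show ?thesis by simp
qed

lemma has_field_derivative_pd:
  fixes f :: "real^'n::finite \<Rightarrow> real"
  assumes "f differentiable (at y)"
  shows "((\<lambda>t. f (y + t *\<^sub>R axis i 1)) has_field_derivative pd i f y) (at 0)"
  using has_field_derivative_pd_at[of f y 0 i] assms by simp

lemma has_field_derivative_pd_if_field_differentiable: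
  assumes "(\<lambda>t. f (y + t *\<^sub>R axis i 1)) field_differentiable (at 0)"
  shows "((\<lambda>t. f (y + t *\<^sub>R axis i 1)) has_field_derivative pd i f y) (at 0)"
  using assms unfolding pd_def by (simp add: DERIV_deriv_iff_field_differentiable)

lemma field_differentiable_line_if_differentiable:
  fixes f :: "real^'n::finite \<Rightarrow> real"
  assumes "f differentiable (at y)"
  shows "(\<lambda>t. f (y + t *\<^sub>R axis i 1)) field_differentiable (at 0)"
  using has_field_derivative_pd[OF assms] unfolding field_differentiable_def by blast

lemma pd_eqI:
  assumes "((\<lambda>t. f (y + t *\<^sub>R axis i 1)) has_field_derivative D) (at 0)"
  shows "pd i f y = D"
  unfolding pd_def using assms by (rule DERIV_imp_deriv)

lemma pd_const [simp]: "pd i (\<lambda>z. c) y = 0"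
  by (rule pd_eqI) simp

lemma pd_cong_eventually:
  assumes "eventually (\<lambda>t. f (y + t *\<^sub>R axis i 1) = h (y + t *\<^sub>R axis i 1)) (nhds 0)"
  shows "pd i f y = pd i h y"
proof -
  have "((\<lambda>t. f (y + t *\<^sub>R axis i 1)) has_field_derivative D) (at 0) \<longleftrightarrow>
        ((\<lambda>t. h (y + t *\<^sub>R axis i 1)) has_field_derivative D) (at 0)" for D
    by (rule DERIV_cong_ev) (use assms in auto)
  then show ?thesis unfolding pd_def deriv_def by simp
qed

text \<open>On a manifold with boundary only one-sided values are available; a two-sided derivative
  is still determined by them.\<close>

lemma has_field_derivative_unique_right:
  fixes f h :: "real \<Rightarrow> real"
  assumes "(f has_field_derivative D) (at 0)" and "(h has_field_derivative E) (at 0)"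
    and "e > 0" and "\<And>t. 0 \<le> t \<Longrightarrow> t < e \<Longrightarrow> f t = h t"
  shows "D = E"
proof -
  define q where "q t = f t - h t" for t
  have "(q has_field_derivative D - E) (at 0)"
    unfolding q_def using assms(1,2) by (rule DERIV_diff)
  then have "((\<lambda>t. (q t - q 0) / (t - 0)) \<longlongrightarrow> D - E) (at_right 0)"
    unfolding has_field_derivative_iff by (rule tendsto_within_subset) auto
  moreover have "eventually (\<lambda>t. (q t - q 0) / (t - 0) = 0) (at_right (0::real))"
    unfolding eventually_at_right_field q_def using assms(3,4) by (intro exI[of _ e]) auto
  then have "((\<lambda>t. (q t - q 0) / (t - 0)) \<longlongrightarrow> 0) (at_right 0)"
    by (rule tendsto_eventually)
  ultimately have "D - E = 0" by (rule tendsto_unique[rotated]) simp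
  then show ?thesis by simp
qed

section \<open>Smooth functions and the symmetry of second derivatives\<close>

lemma smooth_on_pd: "smooth_on U f \<Longrightarrow> smooth_on U (pd i f)"
  unfolding smooth_on_def
proof
  fix "is" assume "\<forall>is. foldr pd is f differentiable_on U"
  then have "foldr pd (is @ [i]) f differentiable_on U" by blast
  then show "foldr pd is (pd i f) differentiable_on U" by simp
qed

lemma smooth_on_imp_differentiable:
  "smooth_on U f \<Longrightarrow> open U \<Longrightarrow> y \<in> U \<Longrightarrow> f differentiable (at y)"
  unfolding smooth_on_def
  by (metis at_within_open differentiable_on_def foldr.simps(1) id_apply)

lemma dist_add_axes_le:
  fixes x :: "real^'n::finite"
  assumes "\<bar>s\<bar> \<le> h" "\<bar>k\<bar> \<le> h"
  shows "dist (x + s *\<^sub>R axis i 1 + k *\<^sub>R axis j 1) x \<le> 2 * h"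
proof -
  have "dist (x + s *\<^sub>R axis i 1 + k *\<^sub>R axis j 1) x = norm (s *\<^sub>R axis i (1::real) + k *\<^sub>R axis j 1)"
    by (simp add: dist_norm)
  also have "\<dots> \<le> norm (s *\<^sub>R axis i (1::real)) + norm (k *\<^sub>R axis j (1::real))"
    by (rule norm_triangle_ineq)
  also have "\<dots> = \<bar>s\<bar> + \<bar>k\<bar>" by simp
  finally show ?thesis using assms by simp
qed

lemma second_difference_mvt:
  fixes f :: "real^'n::finite \<Rightarrow> real"
  assumes U: "open U" and inU: "\<And>p. dist p x \<le> 2 * h \<Longrightarrow> p \<in> U"
    and sm: "smooth_on U f" and h: "h > 0"
  shows "\<exists>p. dist p x \<le> 2 * h \<and>
     f (x + h *\<^sub>R axis l 1 + h *\<^sub>R axis k 1) - f (x + h *\<^sub>R axis k 1) - f (x + h *\<^sub>R axis l 1) + f x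
       = h * h * pd l (pd k f) p"
proof -
  let ?v = "axis k (1::real)" and ?w = "axis l (1::real)"
  have dU: "F differentiable (at p)" if "smooth_on U F" "dist p x \<le> 2 * h" for F p
    using smooth_on_imp_differentiable U inU that by blast
  define \<phi> where "\<phi> s = f ((x + h *\<^sub>R ?w) + s *\<^sub>R ?v) - f (x + s *\<^sub>R ?v)" for s
  have "(\<phi> has_field_derivative
      (pd k f ((x + h *\<^sub>R ?w) + s *\<^sub>R ?v) - pd k f (x + s *\<^sub>R ?v))) (at s)"
    if "0 \<le> s" "s \<le> h" for s
  proof -
    have "dist ((x + h *\<^sub>R ?w) + s *\<^sub>R ?v) x \<le> 2 * h"
      using dist_add_axes_le[of h h s x l k] that h by (simp add: add_ac)
    moreover have "dist (x + s *\<^sub>R ?v) x \<le> 2 * h"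
      using dist_add_axes_le[of s h 0 x k l] that h by simp
    ultimately show ?thesis
      unfolding \<phi>_def by (intro DERIV_diff has_field_derivative_pd_at dU[OF sm])
  qed
  from MVT2[OF h this] obtain s1 where s1: "0 < s1" "s1 < h"
    "\<phi> h - \<phi> 0 = (h - 0) * (pd k f ((x + h *\<^sub>R ?w) + s1 *\<^sub>R ?v) - pd k f (x + s1 *\<^sub>R ?v))"
    by blast
  define \<psi> where "\<psi> t = pd k f ((x + s1 *\<^sub>R ?v) + t *\<^sub>R ?w)" for t
  have "(\<psi> has_field_derivative pd l (pd k f) ((x + s1 *\<^sub>R ?v) + t *\<^sub>R ?w)) (at t)"
    if "0 \<le> t" "t \<le> h" for t
  proof -
    have "dist ((x + s1 *\<^sub>R ?v) + t *\<^sub>R ?w) x \<le> 2 * h"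
      using dist_add_axes_le[of s1 h t x k l] s1 that by simp
    then show ?thesis
      unfolding \<psi>_def by (intro has_field_derivative_pd_at dU[OF smooth_on_pd[OF sm]])
  qed
  from MVT2[OF h this] obtain t1 where t1: "0 < t1" "t1 < h"
    "\<psi> h - \<psi> 0 = (h - 0) * pd l (pd k f) ((x + s1 *\<^sub>R ?v) + t1 *\<^sub>R ?w)"
    by blast
  have "dist ((x + s1 *\<^sub>R ?v) + t1 *\<^sub>R ?w) x \<le> 2 * h"
    using dist_add_axes_le[of s1 h t1 x k l] s1 t1 by simp
  moreover have "\<phi> h - \<phi> 0 = f (x + h *\<^sub>R ?w + h *\<^sub>R ?v) - f (x + h *\<^sub>R ?v) - f (x + h *\<^sub>R ?w) + f x"
    unfolding \<phi>_def by (simp add: add_ac)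
  moreover have "pd k f ((x + h *\<^sub>R ?w) + s1 *\<^sub>R ?v) - pd k f (x + s1 *\<^sub>R ?v) = \<psi> h - \<psi> 0"
    unfolding \<psi>_def by (simp add: add_ac)
  ultimately show ?thesis
    using s1(3) t1(3) by (intro exI[of _ "(x + s1 *\<^sub>R ?v) + t1 *\<^sub>R ?w"]) simp
qed

text \<open>Schwarz's theorem: both mixed derivatives are limits of the same second difference
  quotient, by the mean value theorem applied twice.\<close>

lemma pd_commute:
  fixes f :: "real^'n::finite \<Rightarrow> real"
  assumes U: "open U" and x: "x \<in> U" and sm: "smooth_on U f"
  shows "pd i (pd j f) x = pd j (pd i f) x"
proof (rule ccontr)
  let ?A = "pd j (pd i f)" and ?B = "pd i (pd j f)"
  assume ne: "?B x \<noteq> ?A x"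
  define d where "d = \<bar>?A x - ?B x\<bar>"
  have d: "d > 0" using ne by (simp add: d_def)
  have "continuous (at x) ?A"
    using smooth_on_imp_differentiable[OF smooth_on_pd[OF smooth_on_pd[OF sm]] U x]
    by (rule differentiable_imp_continuous_within)
  then obtain dA where dA: "dA > 0" "\<forall>y. dist y x < dA \<longrightarrow> dist (?A y) (?A x) < d / 2"
    using d unfolding continuous_at_eps_delta by (meson half_gt_zero)
  have "continuous (at x) ?B"
    using smooth_on_imp_differentiable[OF smooth_on_pd[OF smooth_on_pd[OF sm]] U x]
    by (rule differentiable_imp_continuous_within)
  then obtain dB where dB: "dB > 0" "\<forall>y. dist y x < dB \<longrightarrow> dist (?B y) (?B x) < d / 2"
    using d unfolding continuous_at_eps_delta by (meson half_gt_zero)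
  obtain r where r: "r > 0" "ball x r \<subseteq> U" using U x open_contains_ball by blast
  define h where "h = min r (min dA dB) / 4"
  have h: "h > 0" using r dA dB by (simp add: h_def)
  have inU: "p \<in> U" if "dist p x \<le> 2 * h" for p
  proof -
    have "dist x p < r" using that h r by (simp add: h_def dist_commute)
    then show ?thesis using r by auto
  qed
  obtain p where p: "dist p x \<le> 2 * h"
    "f (x + h *\<^sub>R axis j 1 + h *\<^sub>R axis i 1) - f (x + h *\<^sub>R axis i 1) - f (x + h *\<^sub>R axis j 1) + f x
       = h * h * ?A p"
    using second_difference_mvt[OF U inU sm h, where k = i and l = j] by blast
  obtain q where q: "dist q x \<le> 2 * h"
    "f (x + h *\<^sub>R axis i 1 + h *\<^sub>R axis j 1) - f (x + h *\<^sub>R axis j 1) - f (x + h *\<^sub>R axis i 1) + f x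
       = h * h * ?B q"
    using second_difference_mvt[OF U inU sm h, where k = j and l = i] by blast
  have "f (x + h *\<^sub>R axis j 1 + h *\<^sub>R axis i 1) = f (x + h *\<^sub>R axis i 1 + h *\<^sub>R axis j 1)"
    by (simp add: add_ac)
  then have "h * h * ?A p = h * h * ?B q" using p(2) q(2) by linarith
  then have eq: "?A p = ?B q" using h by simp
  have "dist p x < dA" "dist q x < dB" using p(1) q(1) h dA dB by (simp_all add: h_def)
  then have "\<bar>?A p - ?A x\<bar> < d / 2" "\<bar>?B q - ?B x\<bar> < d / 2"
    using dA dB by (auto simp: dist_real_def)
  then have "\<bar>?A x - ?B x\<bar> < d" using eq by linarith
  then show False by (simp add: d_def)
qed

lemma matrix_mul_matrix_inv:
  fixes M :: "real^'n::finite^'n"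
  assumes "invertible M"
  shows "M ** matrix_inv M = mat 1" "matrix_inv M ** M = mat 1"
proof -
  have "\<exists>A'. M ** A' = mat 1 \<and> A' ** M = mat 1" using assms unfolding invertible_def by blast
  then have "M ** matrix_inv M = mat 1 \<and> matrix_inv M ** M = mat 1"
    unfolding matrix_inv_def by (rule someI_ex)
  then show "M ** matrix_inv M = mat 1" "matrix_inv M ** M = mat 1" by auto
qed

lemma matrix_inv_unique:
  fixes M B :: "real^'n::finite^'n"
  assumes "M ** B = mat 1"
  shows "matrix_inv M = B"
proof -
  have inv: "invertible M"
    using assms matrix_left_right_inverse unfolding invertible_def by blast
  have "matrix_inv M = matrix_inv M ** (M ** B)" using assms by simp
  also have "\<dots> = (matrix_inv M ** M) ** B" by (simp add: matrix_mul_assoc)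
  also have "\<dots> = B" using matrix_mul_matrix_inv[OF inv] by simp
  finally show ?thesis .
qed

lemma matrix_inv_scaleR:
  fixes M :: "real^'n::finite^'n"
  assumes "invertible M" "c \<noteq> 0"
  shows "matrix_inv (c *\<^sub>R M) = inverse c *\<^sub>R matrix_inv M"
proof (rule matrix_inv_unique)
  have "((c *\<^sub>R M) ** (inverse c *\<^sub>R matrix_inv M)) $ i $ j = (M ** matrix_inv M) $ i $ j" for i j
    unfolding matrix_matrix_mult_def using assms(2) by (simp add: field_simps)
  then show "(c *\<^sub>R M) ** (inverse c *\<^sub>R matrix_inv M) = mat 1"
    using matrix_mul_matrix_inv(1)[OF assms(1)] by (simp add: vec_eq_iff)
qed

lemma matrix_diff_ldistrib:
  fixes A B C :: "real^'n::finite^'n"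
  shows "A ** (B - C) = A ** B - A ** C"
  by (simp add: vec_eq_iff matrix_matrix_mult_def sum_subtractf algebra_simps)

lemma matrix_diff_rdistrib:
  fixes A B C :: "real^'n::finite^'n"
  shows "(B - C) ** A = B ** A - C ** A"
  by (simp add: vec_eq_iff matrix_matrix_mult_def sum_subtractf algebra_simps)

lemma matrix_neg_rmul:
  fixes A B :: "real^'n::finite^'n"
  shows "A ** (- B) = - (A ** B)"
  by (simp add: vec_eq_iff matrix_matrix_mult_def sum_negf)

lemma invertible_if_pos_def:
  fixes M :: "real^'n::finite^'n"
  assumes "\<forall>v. v \<noteq> 0 \<longrightarrow> v \<bullet> (M *v v) > 0"
  shows "invertible M"
proof -
  have "\<forall>x. M *v x = 0 \<longrightarrow> x = 0"
    using assms by (metis inner_zero_right less_irrefl)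
  then obtain B where "B ** M = mat 1" using matrix_left_invertible_ker by blast
  then show ?thesis unfolding invertible_def using matrix_left_right_inverse by blast
qed

lemma matrix_inv_Cramer:
  fixes M :: "real^'n::finite^'n"
  assumes d: "det M \<noteq> 0"
  shows "matrix_inv M $ k $ j = det (\<chi> r c. if c = k then axis j 1 $ r else M $ r $ c) / det M"
proof -
  have inv: "invertible M" using d invertible_det_nz by blast
  define x where "x = (\<chi> k. matrix_inv M $ k $ j)"
  have "(M *v x) $ r = (M ** matrix_inv M) $ r $ j" for r
    by (simp add: x_def matrix_vector_mult_def matrix_matrix_mult_def)
  then have "M *v x = axis j 1"
    using matrix_mul_matrix_inv(1)[OF inv] by (simp add: vec_eq_iff mat_def axis_def)
  then have "x = (\<chi> k. det (\<chi> r c. if c = k then axis j 1 $ r else M $ r $ c) / det M)"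
    using cramer[OF d] by blast
  then show ?thesis by (simp add: x_def vec_eq_iff)
qed

lemma field_differentiable_prod:
  fixes f :: "'i \<Rightarrow> real \<Rightarrow> real"
  shows "finite S \<Longrightarrow> (\<forall>i\<in>S. f i field_differentiable (at t0)) \<Longrightarrow>
     (\<lambda>t. \<Prod>i\<in>S. f i t) field_differentiable (at t0)"
proof (induction S rule: finite_induct)
  case (insert a S)
  then show ?case by (simp add: field_differentiable_mult)
qed simp

lemma field_differentiable_det:
  fixes M :: "real \<Rightarrow> real^'n::finite^'n"
  assumes "\<forall>r c. (\<lambda>t. M t $ r $ c) field_differentiable (at t0)"
  shows "(\<lambda>t. det (M t)) field_differentiable (at t0)"
  unfolding det_def
  by (intro field_differentiable_sum field_differentiable_mult field_differentiable_const
      field_differentiable_prod) (use assms in auto)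

text \<open>In every term of the Leibniz expansion of det (tI - M - sP) either row nn contributes a
  vanishing off-diagonal entry of M, or nn is a fixed point of the permutation, which then
  meets column nn only in the diagonal entry, where P vanishes.\<close>

lemma charpoly_add_column:
  fixes M P :: "real^'n::finite^'n"
  assumes M: "\<forall>c. c \<noteq> nn \<longrightarrow> M $ nn $ c = 0" and P: "\<forall>r c. c \<noteq> nn \<longrightarrow> P $ r $ c = 0"
    and Pn: "P $ nn $ nn = 0"
  shows "charpoly (M + s *\<^sub>R P) = charpoly M"
  unfolding charpoly_def det_def
proof (rule sum.cong[OF refl])
  let ?X = "\<lambda>A. (\<chi> i j. (if i = j then [:0, 1:] else 0) - [:A $ i $ j:]) :: real poly^'n^'n"
  fix p assume "p \<in> {p. p permutes (UNIV::'n set)}"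
  then have pp: "p permutes (UNIV::'n set)" by simp
  show "of_int (sign p) * (\<Prod>i\<in>UNIV. ?X (M + s *\<^sub>R P) $ i $ p i) =
        of_int (sign p) * (\<Prod>i\<in>UNIV. ?X M $ i $ p i)"
  proof (cases "p nn = nn")
    case False
    then have z: "?X (M + s *\<^sub>R P) $ nn $ p nn = 0" "?X M $ nn $ p nn = 0"
      using M P by auto
    have "(\<Prod>i\<in>UNIV. ?X (M + s *\<^sub>R P) $ i $ p i) = 0"
      by (rule prod_zero) (simp, use z(1) in blast)
    moreover have "(\<Prod>i\<in>UNIV. ?X M $ i $ p i) = 0"
      by (rule prod_zero) (simp, use z(2) in blast)
    ultimately show ?thesis by (simp only: mult_zero_right)
  next
    case True
    have "?X (M + s *\<^sub>R P) $ i $ p i = ?X M $ i $ p i" for i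
    proof (cases "p i = nn")
      case True
      then have "i = nn" using \<open>p nn = nn\<close> pp by (metis permutes_inj injD)
      then show ?thesis using \<open>p nn = nn\<close> Pn by simp
    next
      case False
      then show ?thesis using P by simp
    qed
    then show ?thesis by (simp only:)
  qed
qed

lemma Fcoef_eq_0:
  fixes g0 A :: "real^'n::finite^'n" and i j :: 'n
  defines "E \<equiv> (\<chi> a b. if a = i \<and> b = j then 1 else 0) :: real^'n^'n"
  assumes "\<forall>c. c \<noteq> nn \<longrightarrow> (matrix_inv g0 ** A) $ nn $ c = 0"
    and "\<forall>r c. c \<noteq> nn \<longrightarrow> (matrix_inv g0 ** E) $ r $ c = 0"
    and "(matrix_inv g0 ** E) $ nn $ nn = 0"
  shows "Fcoef F idx g0 A i j = 0"
proof -
  have "matrix_inv g0 ** (A + s *\<^sub>R E) = matrix_inv g0 ** A + s *\<^sub>R (matrix_inv g0 ** E)" for s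
    by (simp add: vec_eq_iff matrix_matrix_mult_def sum.distrib sum_distrib_left algebra_simps)
  then have "(\<lambda>s. F (\<chi> m. esym (idx m) (matrix_inv g0 ** (A + s *\<^sub>R E)))) =
             (\<lambda>s. F (\<chi> m. esym (idx m) (matrix_inv g0 ** A)))"
    unfolding esym_def using charpoly_add_column[OF assms(2-4)] by simp
  then show ?thesis unfolding Fcoef_def E_def by (simp add: DERIV_imp_deriv)
qed

lemma sum_UNIV_single:
  fixes f :: "'a::finite \<Rightarrow> real"
  assumes "\<forall>l. l \<noteq> k \<longrightarrow> f l = 0"
  shows "(\<Sum>l\<in>UNIV. f l) = f k"
proof -
  have "(\<Sum>l\<in>UNIV. f l) = (\<Sum>l\<in>UNIV. if l = k then f l else 0)"
    by (rule sum.cong) (use assms in auto)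
  then show ?thesis by simp
qed

lemma sum_if_const: "(\<Sum>j\<in>A. if P then f j else 0) = (if P then sum f A else (0::real))"
  by simp

lemma quadratic_form_perturb_left:
  fixes G :: "'n::finite \<Rightarrow> 'n \<Rightarrow> real"
  shows "(\<Sum>i\<in>UNIV. \<Sum>j\<in>UNIV. G i j * (- s * v i + (if i = n then c else 0)) * v j)
    = - s * (\<Sum>i\<in>UNIV. \<Sum>j\<in>UNIV. G i j * v i * v j) + c * (\<Sum>j\<in>UNIV. G n j * v j)"
proof -
  have "G i j * (- s * v i + (if i = n then c else 0)) * v j
      = - s * (G i j * v i * v j) + (if i = n then c * (G i j * v j) else 0)" for i j
    by (simp add: algebra_simps)
  then show ?thesis by (simp only: sum.distrib sum_if_const) (simp add: sum_distrib_left)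
qed

lemma quadratic_form_perturb_right:
  fixes G :: "'n::finite \<Rightarrow> 'n \<Rightarrow> real"
  shows "(\<Sum>i\<in>UNIV. \<Sum>j\<in>UNIV. G i j * v i * (- s * v j + (if j = n then c else 0)))
    = - s * (\<Sum>i\<in>UNIV. \<Sum>j\<in>UNIV. G i j * v i * v j) + c * (\<Sum>i\<in>UNIV. G i n * v i)"
proof -
  have "G i j * v i * (- s * v j + (if j = n then c else 0))
      = - s * (G i j * v i * v j) + (if j = n then c * (G i j * v i) else 0)" for i j
    by (simp add: algebra_simps)
  then show ?thesis by (simp only: sum.distrib) (simp add: sum_distrib_left)
qed

lemma quadratic_form_drop_corner:
  fixes G :: "'n::finite \<Rightarrow> 'n \<Rightarrow> real"
  shows "(\<Sum>i\<in>UNIV. \<Sum>j\<in>UNIV. (m * (G i j - (if i = n \<and> j = n then 1 else 0))) * v i * v j)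
    = m * (\<Sum>i\<in>UNIV. \<Sum>j\<in>UNIV. G i j * v i * v j) - m * v n * v n"
proof -
  have "(m * (G i j - (if i = n \<and> j = n then 1 else 0))) * v i * v j
      = m * (G i j * v i * v j) - (if i = n then (if j = n then m * v n * v n else 0) else 0)" for i j
    by (simp add: algebra_simps)
  then show ?thesis by (simp only: sum_subtractf sum_if_const) (simp add: sum_distrib_left)
qed

lemma sum_mult_delta_right [simp]:
  fixes f :: "'a::finite \<Rightarrow> real"
  shows "(\<Sum>l\<in>UNIV. f l * (if l = k then c else 0)) = f k * c"
    "(\<Sum>l\<in>UNIV. f l * (if k = l then c else 0)) = f k * c"
  by (simp_all add: if_distrib[of "(*) _"] cong: if_cong)

lemma sum_mult_delta_left [simp]:
  fixes f :: "'a::finite \<Rightarrow> real"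
  shows "(\<Sum>l\<in>UNIV. (if l = k then c else 0) * f l) = c * f k"
    "(\<Sum>l\<in>UNIV. (if k = l then c else 0) * f l) = c * f k"
  by (simp_all add: if_distrib[of "\<lambda>x. x * _"] cong: if_cong)

section \<open>Flat metrics in Fermi coordinates with umbilic boundary\<close>

lemma Ahat_entry:
  "Ahat g u y $ a $ b = pd a (pd b u) y - (\<Sum>k\<in>UNIV. christ g k a b y * pd k u y)
     + pd a u y * pd b u y - 1/2 * gradnorm2 g u y * g y $ a $ b"
  by (simp add: Ahat_def hess_def)


locale fermi_umbilic =
  fixes g :: "real^'n::finite \<Rightarrow> real^'n^'n" and u :: "real^'n \<Rightarrow> real"
    and x0 :: "real^'n" and nn :: 'n and U :: "(real^'n) set" and mu muhat :: real
  assumes U_open: "open U" and x0U: "x0 \<in> U" and bdry: "x0 $ nn = 0"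
    and g_smooth: "\<forall>i j. smooth_on U (\<lambda>x. g x $ i $ j)"
    and u_smooth: "smooth_on U u"
    and g_metric: "\<forall>x\<in>U. x $ nn \<ge> 0 \<longrightarrow>
        (\<forall>i j. g x $ i $ j = g x $ j $ i) \<and> (\<forall>v. v \<noteq> 0 \<longrightarrow> v \<bullet> (g x *v v) > 0)"
    and fermi: "\<forall>x\<in>U. x $ nn \<ge> 0 \<longrightarrow>
        g x $ nn $ nn = 1 \<and> (\<forall>a. a \<noteq> nn \<longrightarrow> g x $ a $ nn = 0 \<and> g x $ nn $ a = 0)"
    and flat: "\<forall>x\<in>U. x $ nn \<ge> 0 \<longrightarrow> flat_at g x"
    and umbilic: "\<forall>x\<in>U. x $ nn = 0 \<longrightarrow>
        (\<forall>a b. a \<noteq> nn \<longrightarrow> b \<noteq> nn \<longrightarrow> sff g nn a b x = mu * g x $ a $ b)"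
    and umbilic_hat: "\<forall>x\<in>U. x $ nn = 0 \<longrightarrow>
        (\<forall>a b. a \<noteq> nn \<longrightarrow> b \<noteq> nn \<longrightarrow> sff (conf g u) nn a b x = muhat * conf g u x $ a $ b)"
begin

definition in_halfspace where "in_halfspace y \<longleftrightarrow> y \<in> U \<and> 0 \<le> y $ nn"
definition on_boundary where "on_boundary y \<longleftrightarrow> y \<in> U \<and> y $ nn = 0"

lemma on_boundary_in_halfspace: "on_boundary y \<Longrightarrow> in_halfspace y"
  by (simp add: in_halfspace_def on_boundary_def)

lemma in_halfspace_in_U: "in_halfspace y \<Longrightarrow> y \<in> U"
  by (simp add: in_halfspace_def)

lemma on_boundary_x0: "on_boundary x0"
  using x0U bdry by (simp add: on_boundary_def)

lemma in_halfspace_x0: "in_halfspace x0"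
  using on_boundary_in_halfspace[OF on_boundary_x0] .

lemma differentiable_g: "y \<in> U \<Longrightarrow> (\<lambda>x. g x $ i $ j) differentiable (at y)"
  using smooth_on_imp_differentiable U_open g_smooth by blast

lemma differentiable_pd_g: "y \<in> U \<Longrightarrow> pd l (\<lambda>x. g x $ i $ j) differentiable (at y)"
  using smooth_on_imp_differentiable U_open g_smooth smooth_on_pd by blast

lemma differentiable_u: "y \<in> U \<Longrightarrow> u differentiable (at y)"
  using smooth_on_imp_differentiable U_open u_smooth by blast

lemma differentiable_pd_u: "y \<in> U \<Longrightarrow> pd i u differentiable (at y)"
  using smooth_on_imp_differentiable U_open u_smooth smooth_on_pd by blast

lemma differentiable_pd_pd_u: "y \<in> U \<Longrightarrow> pd i (pd j u) differentiable (at y)"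
  using smooth_on_imp_differentiable U_open u_smooth smooth_on_pd by blast

lemma halfspace_segment:
  assumes "in_halfspace y"
  shows "\<exists>e>0. \<forall>t. 0 \<le> t \<and> t < e \<longrightarrow> in_halfspace (y + t *\<^sub>R axis i 1)"
proof -
  obtain r where r: "r > 0" "ball y r \<subseteq> U"
    using U_open in_halfspace_in_U[OF assms] open_contains_ball by blast
  have "in_halfspace (y + t *\<^sub>R axis i 1)" if "0 \<le> t" "t < r" for t
  proof -
    have "dist y (y + t *\<^sub>R axis i 1) < r" using that by (simp add: dist_norm)
    then show ?thesis using r assms that by (auto simp: axis_def in_halfspace_def)
  qed
  then show ?thesis using r by blast
qed

lemma pd_eq_on_halfspace:
  assumes "in_halfspace y" "f differentiable (at y)" "h differentiable (at y)"
    and "\<And>z. in_halfspace z \<Longrightarrow> f z = h z"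
  shows "pd i f y = pd i h y"
proof -
  obtain e where "e > 0" "\<forall>t. 0 \<le> t \<and> t < e \<longrightarrow> in_halfspace (y + t *\<^sub>R axis i 1)"
    using halfspace_segment[OF assms(1)] by blast
  then show ?thesis
    using has_field_derivative_unique_right[OF has_field_derivative_pd[OF assms(2)]
        has_field_derivative_pd[OF assms(3)]] assms(4) by blast
qed

lemma pd_eq_0_on_halfspace:
  assumes "in_halfspace y" "f differentiable (at y)" "\<And>z. in_halfspace z \<Longrightarrow> f z = c"
  shows "pd i f y = 0"
  using pd_eq_on_halfspace[OF assms(1,2), of "\<lambda>z. c"] assms(3) by simp

lemma pd_eq_on_boundary:
  assumes "on_boundary y" "i \<noteq> nn" "\<And>z. on_boundary z \<Longrightarrow> f z = h z"
  shows "pd i f y = pd i h y"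
proof (rule pd_cong_eventually)
  obtain r where r: "r > 0" "ball y r \<subseteq> U"
    using U_open assms(1) open_contains_ball unfolding on_boundary_def by blast
  have "on_boundary (y + t *\<^sub>R axis i 1)" if "dist t 0 < r" for t
  proof -
    have "dist y (y + t *\<^sub>R axis i 1) < r" using that by (simp add: dist_norm)
    then show ?thesis using r assms(1,2) by (auto simp: on_boundary_def axis_def)
  qed
  then show "\<forall>\<^sub>F t in nhds 0. f (y + t *\<^sub>R axis i 1) = h (y + t *\<^sub>R axis i 1)"
    unfolding eventually_nhds_metric using r assms(3) by blast
qed

lemma g_normal_row: "in_halfspace y \<Longrightarrow> g y $ nn $ k = (if k = nn then 1 else 0)"
  using fermi by (auto simp: in_halfspace_def)

lemma g_normal_col: "in_halfspace y \<Longrightarrow> g y $ k $ nn = (if k = nn then 1 else 0)"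
  using fermi by (auto simp: in_halfspace_def)

lemma g_sym: "in_halfspace y \<Longrightarrow> g y $ i $ j = g y $ j $ i"
  using g_metric by (auto simp: in_halfspace_def)

lemma g_invertible: "in_halfspace y \<Longrightarrow> invertible (g y)"
  using g_metric by (auto simp: in_halfspace_def intro: invertible_if_pos_def)

lemma g_det_nonzero: "in_halfspace y \<Longrightarrow> det (g y) \<noteq> 0"
  using g_invertible invertible_det_nz by blast

lemma g_diag_pos: "in_halfspace y \<Longrightarrow> g y $ a $ a > 0"
proof -
  assume "in_halfspace y"
  then have "axis a 1 \<bullet> (g y *v axis a 1) > 0"
    using g_metric by (auto simp: in_halfspace_def axis_eq_0_iff)
  moreover have "(g y *v axis a 1) $ a = g y $ a $ a"
    by (simp add: matrix_vector_mult_def axis_def)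
  ultimately show ?thesis by (simp add: inner_axis')
qed

lemma ginv_mul_g:
  "in_halfspace y \<Longrightarrow> (\<Sum>l\<in>UNIV. ginv g y $ i $ l * g y $ l $ j) = (if i = j then 1 else 0)"
  using matrix_mul_matrix_inv(2)[OF g_invertible, of y]
  by (auto simp: ginv_def matrix_matrix_mult_def mat_def vec_eq_iff)

lemma g_mul_ginv:
  "in_halfspace y \<Longrightarrow> (\<Sum>l\<in>UNIV. g y $ i $ l * ginv g y $ l $ j) = (if i = j then 1 else 0)"
  using matrix_mul_matrix_inv(1)[OF g_invertible, of y]
  by (auto simp: ginv_def matrix_matrix_mult_def mat_def vec_eq_iff)

lemma ginv_normal_col: "in_halfspace y \<Longrightarrow> ginv g y $ k $ nn = (if k = nn then 1 else 0)"
  using ginv_mul_g[of y k nn] by (simp add: g_normal_col)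

lemma ginv_normal_row: "in_halfspace y \<Longrightarrow> ginv g y $ nn $ k = (if k = nn then 1 else 0)"
  using g_mul_ginv[of y nn k] by (simp add: g_normal_row)

lemma pd_g_normal_row: "in_halfspace y \<Longrightarrow> pd i (\<lambda>x. g x $ nn $ k) y = 0"
  by (rule pd_eq_0_on_halfspace[where c="if k = nn then 1 else 0"])
    (auto simp: differentiable_g in_halfspace_in_U g_normal_row)

lemma pd_g_normal_col: "in_halfspace y \<Longrightarrow> pd i (\<lambda>x. g x $ k $ nn) y = 0"
  by (rule pd_eq_0_on_halfspace[where c="if k = nn then 1 else 0"])
    (auto simp: differentiable_g in_halfspace_in_U g_normal_col)

lemma christ_k_nn: "in_halfspace y \<Longrightarrow> christ g k nn nn y = 0"
  by (simp add: christ_def pd_g_normal_row pd_g_normal_col)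

lemma christ_n_ab: "in_halfspace y \<Longrightarrow> christ g nn a b y = - (1/2) * pd nn (\<lambda>x. g x $ a $ b) y"
  by (simp add: christ_def ginv_normal_row pd_g_normal_row pd_g_normal_col)

lemma sff_g_eq_christ: "in_halfspace y \<Longrightarrow> sff g nn a b y = christ g nn a b y"
  by (simp add: sff_def inner_normal_def ginv_normal_col ginv_normal_row g_normal_col)

lemma pd_normal_g_tangential:
  assumes "on_boundary y" "a \<noteq> nn" "b \<noteq> nn"
  shows "pd nn (\<lambda>x. g x $ a $ b) y = -2 * mu * g y $ a $ b"
proof -
  have "sff g nn a b y = mu * g y $ a $ b"
    using umbilic assms by (auto simp: on_boundary_def)
  then show ?thesis
    using sff_g_eq_christ christ_n_ab on_boundary_in_halfspace[OF assms(1)] by simp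
qed

lemma pd_normal_g_row:
  assumes "on_boundary y" "a \<noteq> nn"
  shows "pd nn (\<lambda>x. g x $ a $ l) y = -2 * mu * g y $ a $ l"
  using pd_normal_g_tangential[OF assms] pd_g_normal_col g_normal_col assms
    on_boundary_in_halfspace[OF assms(1)] by (cases "l = nn") simp_all

lemma christ_k_nb:
  assumes "on_boundary y" "b \<noteq> nn"
  shows "christ g k nn b y = - mu * (if k = b then 1 else 0)"
proof -
  have h: "in_halfspace y" using on_boundary_in_halfspace[OF assms(1)] .
  have "christ g k nn b y = (1/2) * (\<Sum>l\<in>UNIV. ginv g y $ k $ l * (-2 * mu * g y $ l $ b))"
    unfolding christ_def using pd_normal_g_row[OF assms] pd_g_normal_row[OF h] g_sym[OF h, of b]
    by simp
  also have "\<dots> = - mu * (\<Sum>l\<in>UNIV. ginv g y $ k $ l * g y $ l $ b)"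
    by (simp add: sum_distrib_left algebra_simps)
  finally show ?thesis using ginv_mul_g[OF h, of k b] by simp
qed

lemma christ_n_ab_on_boundary:
  "on_boundary y \<Longrightarrow> a \<noteq> nn \<Longrightarrow> b \<noteq> nn \<Longrightarrow> christ g nn a b y = mu * g y $ a $ b"
  using christ_n_ab[OF on_boundary_in_halfspace] pd_normal_g_tangential by simp

lemma conf_entry: "conf g u x $ i $ j = exp (-2 * u x) * g x $ i $ j"
  by (simp add: conf_def)

lemma differentiable_conf:
  assumes "y \<in> U"
  shows "(\<lambda>x. conf g u x $ i $ j) differentiable (at y)"
proof -
  obtain u' where u': "(u has_derivative u') (at y)"
    using differentiable_u[OF assms] by (auto simp: differentiable_def)
  have "(\<lambda>x. exp (-2 * u x)) differentiable (at y)"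
    unfolding differentiable_def by (rule exI, rule derivative_intros, rule derivative_intros, rule u')
  then show ?thesis
    unfolding conf_entry using assms by (intro differentiable_mult differentiable_g)
qed

lemma ginv_conf: "in_halfspace y \<Longrightarrow> ginv (conf g u) y $ i $ j = exp (2 * u y) * ginv g y $ i $ j"
  unfolding ginv_def conf_def
  by (simp add: matrix_inv_scaleR[OF g_invertible] exp_minus[symmetric])

lemma inner_normal_conf:
  "in_halfspace y \<Longrightarrow> inner_normal (conf g u) nn y j = (if j = nn then exp (u y) else 0)"
  by (simp add: inner_normal_def ginv_conf ginv_normal_col exp_double power2_eq_square real_sqrt_mult)

lemma pd_normal_conf:
  "y \<in> U \<Longrightarrow> pd nn (\<lambda>x. conf g u x $ a $ b) y =
   exp (-2 * u y) * (-2 * pd nn u y) * g y $ a $ b + exp (-2 * u y) * pd nn (\<lambda>x. g x $ a $ b) y"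
  unfolding conf_entry
  by (rule pd_eqI) (auto intro!: derivative_eq_intros has_field_derivative_pd[OF differentiable_u]
      has_field_derivative_pd[OF differentiable_g] simp: algebra_simps)

lemma christ_conf_n_ab:
  assumes "in_halfspace y" "a \<noteq> nn" "b \<noteq> nn"
  shows "christ (conf g u) nn a b y = - (1/2) * exp (2 * u y) * pd nn (\<lambda>x. conf g u x $ a $ b) y"
proof -
  have "pd c (\<lambda>x. conf g u x $ d $ nn) y = 0" if "d \<noteq> nn" for c d
    by (rule pd_eq_0_on_halfspace[OF assms(1) differentiable_conf[OF in_halfspace_in_U[OF assms(1)]],
          where c = 0]) (use that in \<open>auto simp: conf_entry g_normal_col\<close>)
  then show ?thesis unfolding christ_def ginv_conf[OF assms(1)]
    by (subst sum_UNIV_single[where k = nn]) (auto simp: ginv_normal_row[OF assms(1)] assms(2,3))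
qed

lemma sff_conf:
  assumes "in_halfspace y" "a \<noteq> nn" "b \<noteq> nn"
  shows "sff (conf g u) nn a b y = christ (conf g u) nn a b y * exp (-2 * u y) * exp (u y)"
  unfolding sff_def
  by (subst sum_UNIV_single[where k = nn])
    (auto simp: inner_normal_conf[OF assms(1)] conf_entry g_normal_col[OF assms(1)])

text \<open>The tangential index a only witnesses that the boundary has a tangent direction: in
  dimension one both umbilicity hypotheses are void.\<close>

lemma pd_normal_u_on_boundary:
  assumes y: "on_boundary y" and a: "a \<noteq> nn"
  shows "pd nn u y = muhat * exp (- u y) - mu"
proof -
  have h: "in_halfspace y" using on_boundary_in_halfspace[OF y] .
  define E where "E = exp (u y)"
  have E: "E > 0" by (simp add: E_def)
  have exps: "exp (2 * u y) = E * E" "exp (-2 * u y) = 1 / (E * E)" "exp (- u y) = 1 / E"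
    by (simp_all add: E_def exp_minus divide_inverse flip: exp_add mult_2)
  let ?G = "g y $ a $ a" and ?L = "- (1/2) * (E * E) * (1 / (E * E) * (-2 * pd nn u y) * g y $ a $ a
      + 1 / (E * E) * (-2 * mu * g y $ a $ a)) * (1 / (E * E)) * E"
  have "sff (conf g u) nn a a y = muhat * conf g u y $ a $ a"
    using umbilic_hat y a by (auto simp: on_boundary_def)
  then have eq: "?L = muhat * (1 / (E * E) * ?G)"
    unfolding sff_conf[OF h a a] christ_conf_n_ab[OF h a a] pd_normal_conf[OF in_halfspace_in_U[OF h]]
      pd_normal_g_tangential[OF y a a] by (simp only: conf_entry exps E_def[symmetric])
  have "?G * ((pd nn u y + mu) * E) = (E * E) * ?L"
    using E by (simp add: field_simps)
  also have "\<dots> = ?G * muhat"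
    using E by (simp only: eq) (simp add: field_simps)
  finally have "?G * ((pd nn u y + mu) * E) = ?G * muhat" .
  then have "(pd nn u y + mu) * E = muhat" using g_diag_pos[OF h, of a] by simp
  then show ?thesis unfolding exps using E by (simp add: field_simps)
qed

lemma pd_tangential_pd_normal_u:
  assumes y: "on_boundary y" and c: "c \<noteq> nn"
  shows "pd c (pd nn u) y = - muhat * exp (- u y) * pd c u y"
proof -
  have "pd c (pd nn u) y = pd c (\<lambda>z. muhat * exp (- u z) - mu) y"
    by (rule pd_eq_on_boundary[OF y c]) (use pd_normal_u_on_boundary c in blast)
  also have "\<dots> = - muhat * exp (- u y) * pd c u y"
    using y by (intro pd_eqI) (auto intro!: derivative_eq_intros
        has_field_derivative_pd[OF differentiable_u] simp: on_boundary_def algebra_simps)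
  finally show ?thesis .
qed

lemma pd_normal_pd_tangential_u:
  "on_boundary y \<Longrightarrow> c \<noteq> nn \<Longrightarrow> pd nn (pd c u) y = - muhat * exp (- u y) * pd c u y"
  using pd_commute[OF U_open _ u_smooth, of y nn c] pd_tangential_pd_normal_u[of y c]
  by (simp add: on_boundary_def)

lemma Ahat_normal_tangential:
  assumes c: "c \<noteq> nn"
  shows "Ahat g u x0 $ nn $ c = 0"
proof -
  have "(\<Sum>k\<in>UNIV. christ g k nn c x0 * pd k u x0) = - mu * pd c u x0"
    by (subst sum_UNIV_single[where k = c]) (auto simp: christ_k_nb[OF on_boundary_x0 c])
  then show ?thesis
    unfolding Ahat_def hess_def
    using pd_normal_pd_tangential_u[OF on_boundary_x0 c] g_normal_row[OF in_halfspace_x0, of c] c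
    by (simp add: pd_normal_u_on_boundary[OF on_boundary_x0 c] algebra_simps)
qed

lemma Fcoef_tangential_normal:
  assumes a: "a \<noteq> nn"
  shows "Fcoef F idx (g x0) (Ahat g u x0) a nn = 0"
proof (rule Fcoef_eq_0)
  have G: "matrix_inv (g x0) $ nn $ k = (if k = nn then 1 else 0)" for k
    using ginv_normal_row[OF in_halfspace_x0, of k] by (simp add: ginv_def)
  show "\<forall>c. c \<noteq> nn \<longrightarrow> (matrix_inv (g x0) ** Ahat g u x0) $ nn $ c = 0"
    using Ahat_normal_tangential by (simp add: matrix_matrix_mult_def G)
  show "\<forall>r c. c \<noteq> nn \<longrightarrow> (matrix_inv (g x0) ** (\<chi> i j. if i = a \<and> j = nn then 1 else 0)) $ r $ c = 0"
    by (simp add: matrix_matrix_mult_def)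
  show "(matrix_inv (g x0) ** (\<chi> i j. if i = a \<and> j = nn then 1 else 0)) $ nn $ nn = 0"
    using a by (simp add: matrix_matrix_mult_def G)
qed

abbreviation en where "en \<equiv> axis nn (1::real)"

lemma field_differentiable_ginv:
  "(\<lambda>t. ginv g (x0 + t *\<^sub>R en) $ k $ j) field_differentiable (at 0)"
proof -
  define D where "D t = det (g (x0 + t *\<^sub>R en))" for t
  define Nm where "Nm t = det (\<chi> r c. if c = k then axis j 1 $ r else g (x0 + t *\<^sub>R en) $ r $ c)"
    for t
  have g_fd: "(\<lambda>t. g (x0 + t *\<^sub>R en) $ r $ c) field_differentiable (at 0)" for r c
    by (rule field_differentiable_line_if_differentiable[OF differentiable_g[OF x0U]])
  have D: "D field_differentiable (at 0)"
    unfolding D_def by (rule field_differentiable_det) (use g_fd in blast)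
  have "(\<lambda>t. if c = k then axis j 1 $ r else g (x0 + t *\<^sub>R en) $ r $ c) field_differentiable (at 0)"
    for r c by (cases "c = k") (simp_all add: g_fd)
  then have Nm: "Nm field_differentiable (at 0)"
    unfolding Nm_def by (intro field_differentiable_det) simp
  have D0: "D 0 \<noteq> 0" unfolding D_def using g_det_nonzero[OF in_halfspace_x0] by simp
  obtain \<delta> where \<delta>: "\<delta> > 0" "\<forall>t. dist t 0 < \<delta> \<longrightarrow> dist (D t) (D 0) < \<bar>D 0\<bar>"
    using field_differentiable_imp_continuous_at[OF D] D0
    unfolding continuous_at_eps_delta by (meson zero_less_abs_iff)
  have "Nm t / D t = ginv g (x0 + t *\<^sub>R en) $ k $ j" if "dist t 0 < \<delta>" for t
  proof -
    have "D t \<noteq> 0" using \<delta> that by (auto simp: dist_real_def)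
    then show ?thesis unfolding ginv_def Nm_def D_def by (simp add: matrix_inv_Cramer)
  qed
  then show ?thesis
    using field_differentiable_transform_within[OF \<delta>(1) UNIV_I _ field_differentiable_divide[OF Nm D D0]]
    by simp
qed

lemma field_differentiable_christ:
  "(\<lambda>t. christ g k i j (x0 + t *\<^sub>R en)) field_differentiable (at 0)"
  unfolding christ_def
  by (intro field_differentiable_mult field_differentiable_sum field_differentiable_add
      field_differentiable_diff field_differentiable_const field_differentiable_ginv
      field_differentiable_line_if_differentiable differentiable_pd_g x0U)

lemma field_differentiable_gradnorm2:
  "(\<lambda>t. gradnorm2 g u (x0 + t *\<^sub>R en)) field_differentiable (at 0)"
  unfolding gradnorm2_def
  by (intro field_differentiable_mult field_differentiable_sum field_differentiable_ginv
      field_differentiable_line_if_differentiable differentiable_pd_u x0U)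

lemma pd_normal_christ_tangential:
  assumes a: "a \<noteq> nn" and b: "b \<noteq> nn"
  shows "pd nn (christ g k a b) x0 = (if k = nn then - mu * mu * g x0 $ a $ b else 0)"
proof -
  have R: "riemann g k nn a b x0 = 0" using flat x0U bdry by (simp add: flat_at_def)
  have "pd a (christ g k nn b) x0 = pd a (\<lambda>z. - mu * (if k = b then 1 else 0)) x0"
    by (rule pd_eq_on_boundary[OF on_boundary_x0 a]) (use christ_k_nb b in blast)
  then have pd_christ: "pd a (christ g k nn b) x0 = 0" by simp
  have "christ g k nn m x0 = (if m = nn then 0 else - mu * (if k = m then 1 else 0))" for m
    using christ_k_nn[OF in_halfspace_x0] christ_k_nb[OF on_boundary_x0] by auto
  then have "(\<Sum>m\<in>UNIV. christ g k nn m x0 * christ g m a b x0)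
      = (if k = nn then 0 else - mu * christ g k a b x0)"
    by (subst sum_UNIV_single[where k = k]) auto
  moreover have "(\<Sum>m\<in>UNIV. christ g k a m x0 * christ g m nn b x0) = - mu * christ g k a b x0"
    by (subst sum_UNIV_single[where k = b]) (auto simp: christ_k_nb[OF on_boundary_x0 b])
  ultimately have "pd nn (christ g k a b) x0 = (if k = nn then - mu * christ g k a b x0 else 0)"
    using R unfolding riemann_def sum_subtractf pd_christ by (auto split: if_splits)
  then show ?thesis using christ_n_ab_on_boundary[OF on_boundary_x0 a b] by simp
qed

lemma pd_normal_pd_pd_u:
  assumes a: "a \<noteq> nn" and b: "b \<noteq> nn"
  shows "pd nn (pd a (pd b u)) x0
    = muhat * exp (- u x0) * (pd a u x0 * pd b u x0 - pd a (pd b u) x0)"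
proof -
  have "pd nn (pd a (pd b u)) x0 = pd a (pd nn (pd b u)) x0"
    using pd_commute[OF U_open x0U smooth_on_pd[OF u_smooth]] by blast
  also have "\<dots> = pd a (\<lambda>z. - muhat * exp (- u z) * pd b u z) x0"
    by (rule pd_eq_on_boundary[OF on_boundary_x0 a]) (use pd_normal_pd_tangential_u b in blast)
  also have "\<dots> = muhat * exp (- u x0) * (pd a u x0 * pd b u x0 - pd a (pd b u) x0)"
    by (rule pd_eqI) (auto intro!: derivative_eq_intros has_field_derivative_pd[OF differentiable_u[OF x0U]]
        has_field_derivative_pd[OF differentiable_pd_u[OF x0U]] simp: algebra_simps)
  finally show ?thesis .
qed

lemma pd_normal_ginv_mul_g:
  "(\<Sum>l\<in>UNIV. pd nn (\<lambda>y. ginv g y $ i $ l) x0 * g x0 $ l $ j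
     + ginv g x0 $ i $ l * pd nn (\<lambda>y. g y $ l $ j) x0) = 0"
proof -
  obtain e where e: "e > 0" "\<forall>t. 0 \<le> t \<and> t < e \<longrightarrow> in_halfspace (x0 + t *\<^sub>R en)"
    using halfspace_segment[OF in_halfspace_x0] by blast
  have "((\<lambda>t. \<Sum>l\<in>UNIV. ginv g (x0 + t *\<^sub>R en) $ i $ l * g (x0 + t *\<^sub>R en) $ l $ j)
    has_field_derivative (\<Sum>l\<in>UNIV. pd nn (\<lambda>y. ginv g y $ i $ l) x0 * g x0 $ l $ j
     + ginv g x0 $ i $ l * pd nn (\<lambda>y. g y $ l $ j) x0)) (at 0)"
    by (intro DERIV_sum) (auto intro!: derivative_eq_intros has_field_derivative_pd[OF differentiable_g[OF x0U]]
        has_field_derivative_pd_if_field_differentiable[OF field_differentiable_ginv] simp: algebra_simps)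
  from has_field_derivative_unique_right[OF this _ e(1), of "\<lambda>_. if i = j then 1 else 0" 0]
  show ?thesis using e(2) ginv_mul_g by simp
qed

lemma pd_normal_g_x0:
  "pd nn (\<lambda>y. g y $ i $ j) x0 = -2 * mu * (g x0 $ i $ j - (if i = nn \<and> j = nn then 1 else 0))"
proof (cases "i = nn")
  case True
  then show ?thesis
    using pd_g_normal_row[OF in_halfspace_x0] g_normal_row[OF in_halfspace_x0, of j] by simp
next
  case False
  then show ?thesis using pd_normal_g_row[OF on_boundary_x0 False] by simp
qed

lemma pd_normal_ginv:
  "pd nn (\<lambda>y. ginv g y $ i $ j) x0 = 2 * mu * (ginv g x0 $ i $ j - (if i = nn \<and> j = nn then 1 else 0))"
proof -
  define X :: "real^'n^'n" where "X = (\<chi> i j. pd nn (\<lambda>y. ginv g y $ i $ j) x0)"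
  define E :: "real^'n^'n" where "E = (\<chi> i j. if i = nn \<and> j = nn then 1 else 0)"
  define G where "G = ginv g x0"
  have inv: "g x0 ** G = mat 1" "G ** g x0 = mat 1"
    using matrix_mul_matrix_inv[OF g_invertible[OF in_halfspace_x0]] by (simp_all add: G_def ginv_def)
  have Y: "(\<chi> i j. pd nn (\<lambda>y. g y $ i $ j) x0) = (-2 * mu) *\<^sub>R (g x0 - E)"
    by (simp add: vec_eq_iff E_def pd_normal_g_x0)
  have "(X ** g x0) $ i $ j = - (G ** (\<chi> i j. pd nn (\<lambda>y. g y $ i $ j) x0)) $ i $ j" for i j
    using pd_normal_ginv_mul_g[of i j]
    by (simp add: X_def G_def matrix_matrix_mult_def sum.distrib eq_neg_iff_add_eq_0 algebra_simps)
  then have "X ** g x0 = - (G ** (\<chi> i j. pd nn (\<lambda>y. g y $ i $ j) x0))"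
    by (simp add: vec_eq_iff)
  then have Xg: "X ** g x0 = (2 * mu) *\<^sub>R (G ** (g x0 - E))"
    unfolding Y by (simp add: matrix_neg_rmul matrix_scalar_ac scalar_matrix_assoc[symmetric])
  have "(G ** E) $ i $ j = E $ i $ j" for i j
    using ginv_normal_col[OF in_halfspace_x0, of i]
    by (cases "j = nn") (simp_all add: matrix_matrix_mult_def E_def G_def)
  moreover have "(E ** G) $ i $ j = E $ i $ j" for i j
    using ginv_normal_row[OF in_halfspace_x0, of j]
    by (cases "i = nn") (simp_all add: matrix_matrix_mult_def E_def G_def)
  ultimately have "G ** E = E" "E ** G = E" by (simp_all add: vec_eq_iff)
  then have "X = (2 * mu) *\<^sub>R (G - E)"
    using inv Xg matrix_mul_assoc[of X "g x0" G]
    by (simp add: matrix_diff_ldistrib matrix_diff_rdistrib scalar_matrix_assoc[symmetric])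
  then show ?thesis by (simp add: vec_eq_iff X_def E_def G_def)
qed

definition shat where "shat = muhat * exp (- u x0)"

text \<open>c_nn is the only part of the normal derivative of du at x0 that the boundary conditions
  leave undetermined.\<close>

definition c_nn where "c_nn = pd nn (pd nn u) x0 + shat * pd nn u x0"

lemma pd_normal_pd_u: "pd nn (pd i u) x0 = - shat * pd i u x0 + (if i = nn then c_nn else 0)"
  using pd_normal_pd_tangential_u[OF on_boundary_x0, of i] by (cases "i = nn") (simp_all add: shat_def c_nn_def)

lemma pd_normal_gradnorm2:
  "pd nn (gradnorm2 g u) x0 = 2 * mu * (gradnorm2 g u x0 - pd nn u x0 * pd nn u x0)
     + 2 * (- shat * gradnorm2 g u x0 + c_nn * pd nn u x0)"
proof -
  define G where "G i j = ginv g x0 $ i $ j" for i j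
  define v where "v i = pd i u x0" for i
  have "pd nn (gradnorm2 g u) x0
      = (\<Sum>i\<in>UNIV. \<Sum>j\<in>UNIV. pd nn (\<lambda>y. ginv g y $ i $ j) x0 * v i * v j
        + G i j * pd nn (pd i u) x0 * v j + G i j * v i * pd nn (pd j u) x0)"
    unfolding gradnorm2_def G_def v_def
    by (intro pd_eqI DERIV_sum) (auto intro!: derivative_eq_intros
        has_field_derivative_pd[OF differentiable_pd_u[OF x0U]]
        has_field_derivative_pd_if_field_differentiable[OF field_differentiable_ginv] simp: algebra_simps)
  also have "\<dots> = (\<Sum>i\<in>UNIV. \<Sum>j\<in>UNIV. (2 * mu * (G i j - (if i = nn \<and> j = nn then 1 else 0))) * v i * v j)
      + (\<Sum>i\<in>UNIV. \<Sum>j\<in>UNIV. G i j * (- shat * v i + (if i = nn then c_nn else 0)) * v j)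
      + (\<Sum>i\<in>UNIV. \<Sum>j\<in>UNIV. G i j * v i * (- shat * v j + (if j = nn then c_nn else 0)))"
    unfolding pd_normal_ginv pd_normal_pd_u G_def[symmetric] v_def[symmetric] sum.distrib ..
  also have "\<dots> = 2 * mu * gradnorm2 g u x0 - 2 * mu * v nn * v nn
      + (- shat * gradnorm2 g u x0 + c_nn * v nn) + (- shat * gradnorm2 g u x0 + c_nn * v nn)"
    unfolding quadratic_form_drop_corner quadratic_form_perturb_left quadratic_form_perturb_right
    using ginv_normal_row[OF in_halfspace_x0] ginv_normal_col[OF in_halfspace_x0]
    by (simp add: gradnorm2_def G_def v_def)
  finally show ?thesis by (simp add: v_def algebra_simps)
qed

lemma pd_normal_Ahat:
  "pd nn (\<lambda>y. Ahat g u y $ a $ b) x0 =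
    pd nn (pd a (pd b u)) x0
    - (\<Sum>k\<in>UNIV. pd nn (christ g k a b) x0 * pd k u x0 + christ g k a b x0 * pd nn (pd k u) x0)
    + (pd nn (pd a u) x0 * pd b u x0 + pd a u x0 * pd nn (pd b u) x0)
    - 1/2 * (pd nn (gradnorm2 g u) x0 * g x0 $ a $ b + gradnorm2 g u x0 * pd nn (\<lambda>y. g y $ a $ b) x0)"
  unfolding Ahat_entry
  by (rule pd_eqI) (auto intro!: derivative_eq_intros DERIV_sum
      has_field_derivative_pd[OF differentiable_pd_pd_u[OF x0U]]
      has_field_derivative_pd[OF differentiable_pd_u[OF x0U]]
      has_field_derivative_pd[OF differentiable_g[OF x0U]]
      has_field_derivative_pd_if_field_differentiable[OF field_differentiable_christ]
      has_field_derivative_pd_if_field_differentiable[OF field_differentiable_gradnorm2]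
      simp: algebra_simps)

lemma cov2_Ahat_normal:
  assumes a: "a \<noteq> nn" and b: "b \<noteq> nn"
  shows "cov2 g (Ahat g u) a b nn x0 = pd nn (\<lambda>y. Ahat g u y $ a $ b) x0 + 2 * mu * Ahat g u x0 $ a $ b"
proof -
  have "(\<Sum>k\<in>UNIV. christ g k nn a x0 * Ahat g u x0 $ k $ b) = - mu * Ahat g u x0 $ a $ b"
    by (subst sum_UNIV_single[where k = a]) (auto simp: christ_k_nb[OF on_boundary_x0 a])
  moreover have "(\<Sum>k\<in>UNIV. christ g k nn b x0 * Ahat g u x0 $ a $ k) = - mu * Ahat g u x0 $ a $ b"
    by (subst sum_UNIV_single[where k = b]) (auto simp: christ_k_nb[OF on_boundary_x0 b])
  ultimately show ?thesis by (simp add: cov2_def sum.distrib)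
qed

lemma cov2_Ahat_tangential:
  assumes a: "a \<noteq> nn" and b: "b \<noteq> nn"
  shows "cov2 g (Ahat g u) a b nn x0
     = 2 * mu * Ahat g u x0 $ a $ b
       - muhat * exp (- u x0) * (Ahat g u x0 $ a $ b + Ahat g u x0 $ nn $ nn * g x0 $ a $ b)"
proof -
  define T where "T = (\<Sum>k\<in>UNIV. christ g k a b x0 * pd k u x0)"
  define N where "N = gradnorm2 g u x0"
  define gab where "gab = g x0 $ a $ b"
  have S1: "(\<Sum>k\<in>UNIV. pd nn (christ g k a b) x0 * pd k u x0) = - mu * mu * gab * pd nn u x0"
    by (subst sum_UNIV_single[where k = nn]) (auto simp: pd_normal_christ_tangential[OF a b] gab_def)
  have pw: "christ g k a b x0 * pd nn (pd k u) x0
      = - shat * (christ g k a b x0 * pd k u x0) + (if k = nn then christ g k a b x0 * c_nn else 0)" for k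
    by (simp add: pd_normal_pd_u algebra_simps)
  have S2: "(\<Sum>k\<in>UNIV. christ g k a b x0 * pd nn (pd k u) x0) = - shat * T + mu * gab * c_nn"
    unfolding pw sum.distrib T_def sum_distrib_left[symmetric]
    using christ_n_ab_on_boundary[OF on_boundary_x0 a b] by (simp add: gab_def)
  have pdA: "pd nn (\<lambda>y. Ahat g u y $ a $ b) x0 =
     shat * (pd a u x0 * pd b u x0 - pd a (pd b u) x0)
     - (- mu * mu * gab * pd nn u x0 + (- shat * T + mu * gab * c_nn))
     + ((- shat * pd a u x0) * pd b u x0 + pd a u x0 * (- shat * pd b u x0))
     - 1/2 * ((2 * mu * (N - pd nn u x0 * pd nn u x0) + 2 * (- shat * N + c_nn * pd nn u x0)) * gab
       + N * (-2 * mu * gab))"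
    unfolding pd_normal_Ahat sum.distrib S1 S2 pd_normal_pd_pd_u[OF a b] pd_normal_gradnorm2
      pd_normal_g_tangential[OF on_boundary_x0 a b]
    by (simp add: pd_normal_pd_u a b shat_def N_def gab_def)
  have Aab: "Ahat g u x0 $ a $ b = pd a (pd b u) x0 - T + pd a u x0 * pd b u x0 - 1/2 * N * gab"
    by (simp add: Ahat_entry T_def N_def gab_def)
  have Ann: "Ahat g u x0 $ nn $ nn = pd nn (pd nn u) x0 + pd nn u x0 * pd nn u x0 - 1/2 * N"
    by (simp add: Ahat_entry christ_k_nn[OF in_halfspace_x0] g_normal_row[OF in_halfspace_x0] N_def)
  have un: "pd nn u x0 = shat - mu"
    using pd_normal_u_on_boundary[OF on_boundary_x0 a] by (simp add: shat_def)
  show ?thesis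
    unfolding cov2_Ahat_normal[OF a b] pdA Aab Ann c_nn_def un shat_def[symmetric] gab_def[symmetric]
    by (simp add: algebra_simps)
qed

end

theorem mainTheorem5:
  fixes g :: "real^'n::finite \<Rightarrow> real^'n^'n" and u :: "real^'n \<Rightarrow> real"
    and x0 :: "real^'n" and nn :: 'n and U :: "(real^'n) set"
    and mu muhat :: real and F :: "real^'n \<Rightarrow> real" and idx :: "'n \<Rightarrow> nat"
  assumes U: "open U" "x0 \<in> U" and bdry: "x0 $ nn = 0"
    and g_smooth: "\<forall>i j. smooth_on U (\<lambda>x. g x $ i $ j)"
    and u_smooth: "smooth_on U u"
    and g_metric: "\<forall>x\<in>U. x $ nn \<ge> 0 \<longrightarrow>
        (\<forall>i j. g x $ i $ j = g x $ j $ i) \<and> (\<forall>v. v \<noteq> 0 \<longrightarrow> v \<bullet> (g x *v v) > 0)"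
    and fermi: "\<forall>x\<in>U. x $ nn \<ge> 0 \<longrightarrow>
        g x $ nn $ nn = 1 \<and> (\<forall>a. a \<noteq> nn \<longrightarrow> g x $ a $ nn = 0 \<and> g x $ nn $ a = 0)"
    and flat: "\<forall>x\<in>U. x $ nn \<ge> 0 \<longrightarrow> flat_at g x"
    and umbilic: "\<forall>x\<in>U. x $ nn = 0 \<longrightarrow>
        (\<forall>a b. a \<noteq> nn \<longrightarrow> b \<noteq> nn \<longrightarrow> sff g nn a b x = mu * g x $ a $ b)"
    and umbilic_hat: "\<forall>x\<in>U. x $ nn = 0 \<longrightarrow>
        (\<forall>a b. a \<noteq> nn \<longrightarrow> b \<noteq> nn \<longrightarrow> sff (conf g u) nn a b x = muhat * conf g u x $ a $ b)"
    and idx: "bij_betw idx UNIV {1..CARD('n)}"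
    and F_diff: "\<forall>y. F differentiable (at y)"
  shows "(\<forall>a. a \<noteq> nn \<longrightarrow> Fcoef F idx (g x0) (Ahat g u x0) a nn = 0) \<and>
         (\<forall>a b. a \<noteq> nn \<longrightarrow> b \<noteq> nn \<longrightarrow>
            cov2 g (Ahat g u) a b nn x0
              = 2 * mu * Ahat g u x0 $ a $ b
                - muhat * exp (- u x0) * (Ahat g u x0 $ a $ b + Ahat g u x0 $ nn $ nn * g x0 $ a $ b))"
proof -
  interpret fermi_umbilic g u x0 nn U mu muhat
    by (rule fermi_umbilic.intro) (rule assms)+
  show ?thesis using Fcoef_tangential_normal cov2_Ahat_tangential by simp
qed

end
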